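(* Let $n\ge 1$ and $h\ge 1$ be integers. Let $\mathcal{B}$ be the set of $(2n+1)\times(2n+1)$ integer matrices $B=(B_{i,j})_{i,j\in\{-n,\ldots,n\}}$ (rows and columns indexed by $-n,\ldots,n$) such that: $B_{i,i+1}=1$ for $i\in\{-n,\ldots,0\}$; $B_{i,i+1}=h$ for $i\in\{1,\ldots,n-1\}$; $B_{i,j}\in\{0,1,\ldots,h-1\}$ for $i\in\{1,\ldots,n\}$ and $j\in\{-n,\ldots,-1\}$ (these $n^2$ entries are arbitrary in this range); and all other entries of $B$ are $0$. Let $\mathcal{P}$ be the set of monic integer polynomials of the form $$t^{2n+1}-a_{2n-2}t^{2n-2}-a_{2n-3}t^{2n-3}-\cdots-a_1t-a_0$$ (so the coefficients of $t^{2n}$ and $t^{2n-1}$ are zero) where $a_{2n-k}\in\{0,1,\ldots,h^{k-1}-1\}$ for each $k\in\{2,\ldots,n+1\}$, and $a_{n-k}/h^{k-1}\in\{0,1,\ldots,h^{n-k+1}-1\}$ for each $k\in\{2,\ldots,n\}$. Then the map $B\mapsto\det(tI-B)$ is a bijection from $\mathcal{B}$ onto $\mathcal{P}$.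
   Context: $\det(tI-B)$ is the (monic) characteristic polynomial of $B$. *)

theory Defs
  imports "Jordan_Normal_Form.Char_Poly"
begin

text \<open>A (2n+1)x(2n+1) matrix with rows/columns indexed by -n..n is represented as an
  int mat of dimension 2n+1, where paper index i corresponds to position i + n.\<close>

definition ent :: "nat \<Rightarrow> int mat \<Rightarrow> int \<Rightarrow> int \<Rightarrow> int" where
  "ent n B i j = B $$ (nat (i + int n), nat (j + int n))"

definition Bset :: "nat \<Rightarrow> int \<Rightarrow> int mat set" where
  "Bset n h = {B \<in> carrier_mat (2*n+1) (2*n+1).
     \<forall>i\<in>{-int n..int n}. \<forall>j\<in>{-int n..int n}.
       (if j = i + 1 \<and> i \<le> 0 then ent n B i j = 1
        else if j = i + 1 \<and> 1 \<le> i \<and> i \<le> int n - 1 then ent n B i j = h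
        else if 1 \<le> i \<and> j \<le> -1 then ent n B i j \<in> {0..h-1}
        else ent n B i j = 0)}"

text \<open>p = t^(2n+1) - a_(2n-2) t^(2n-2) - ... - a_0, i.e. a_m = - coeff p m.\<close>

definition Pset :: "nat \<Rightarrow> int \<Rightarrow> int poly set" where
  "Pset n h = {p. degree p = 2*n+1 \<and> coeff p (2*n+1) = 1 \<and>
     coeff p (2*n) = 0 \<and> coeff p (2*n-1) = 0 \<and>
     (\<forall>k\<in>{2..n+1}. - coeff p (2*n-k) \<in> {0..h^(k-1)-1}) \<and>
     (\<forall>k\<in>{2..n}. \<exists>c\<in>{0..h^(n-k+1)-1}. - coeff p (n-k) = c * h^(k-1))}"

end

theory Submission
  imports Defs
begin

text \<open>Write D for the block of free entries of B. Then det(tI - B) equals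
  t^(2n+1) - \<Sum>k,s<n. h^k D k s t^(s+n-1-k), so -a_m is the number whose base-h digits are the
  entries of D on the diagonal s - k = m + 1 - n, at the digit positions k of a window [lo, hi).
  The conditions defining P say precisely that -a_m is h^lo times an (hi - lo)-digit number, so
  the theorem reduces to the uniqueness and existence of base-h expansions, one diagonal at a time.
  The determinant is computed from a solution of (tI - B) u = q e_2n: since tI - B is lower
  Hessenberg, det(tI - B) u_0 = q times the product of its superdiagonal entries.\<close>

lemma sum_digits_bound:
  fixes h :: int
  assumes h: "h \<ge> 1" and x: "\<And>k. k < U \<Longrightarrow> x k \<in> {0..h-1}"
  shows "(\<Sum>k<U. h^k * x k) \<in> {0..h^U-1}"
  using x
proof (induction U)
  case (Suc U)
  then have IH: "(\<Sum>k<U. h^k * x k) \<in> {0..h^U-1}" and xU: "x U \<in> {0..h-1}" by auto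
  have "h^U * x U \<le> h^U * (h-1)"
    using h xU by (intro mult_left_mono) auto
  moreover have "0 \<le> h^U * x U" using h xU by simp
  ultimately show ?case using IH by (auto simp: algebra_simps)
qed simp

lemma sum_digits_inject:
  fixes h :: int
  assumes h: "h \<ge> 1"
    and x: "\<And>k. k < U \<Longrightarrow> x k \<in> {0..h-1}" and y: "\<And>k. k < U \<Longrightarrow> y k \<in> {0..h-1}"
    and eq: "(\<Sum>k<U. h^k * x k) = (\<Sum>k<U. h^k * y k)"
  shows "\<forall>k<U. x k = y k"
  using x y eq
proof (induction U)
  case (Suc U)
  have x': "\<And>k. k < U \<Longrightarrow> x k \<in> {0..h-1}" and y': "\<And>k. k < U \<Longrightarrow> y k \<in> {0..h-1}"
    using Suc.prems(1,2) by simp_all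
  have top_digit: "((\<Sum>k<U. h^k * z k) + h^U * z U) div h^U = z U"
    if "\<And>k. k < U \<Longrightarrow> z k \<in> {0..h-1}" for z
  proof -
    have "(\<Sum>k<U. h^k * z k) div h^U = 0"
      using sum_digits_bound[OF h that] by (intro div_pos_pos_trivial) auto
    then show ?thesis using h by simp
  qed
  have split: "(\<Sum>k<U. h^k * x k) + h^U * x U = (\<Sum>k<U. h^k * y k) + h^U * y U"
    using Suc.prems(3) by simp
  then have "x U = y U"
    using top_digit[of x, OF x'] top_digit[of y, OF y'] by simp
  moreover have "\<forall>k<U. x k = y k"
  proof (rule Suc.IH[OF x' y'])
    show "(\<Sum>k<U. h^k * x k) = (\<Sum>k<U. h^k * y k)"
      using split \<open>x U = y U\<close> by simp
  qed
  ultimately show ?case using less_Suc_eq by auto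
qed simp

lemma sum_digits_mod:
  fixes h a :: int
  assumes "h \<ge> 1"
  shows "(\<Sum>k<U. h^k * (a div h^k mod h)) = a mod h^U"
proof (induction U)
  case (Suc U)
  have "a mod h^Suc U = h^U * (a div h^U mod h) + a mod h^U"
    unfolding power_Suc2 using assms by (intro zmod_zmult2_eq) simp
  then show ?case using Suc by simp
qed simp

lemma sum_window_shift:
  fixes h :: "'a :: comm_semiring_1"
  shows "(\<Sum>k\<in>{L..<U}. h^k * x k) = h^L * (\<Sum>j<U-L. h^j * x (L + j))"
proof (cases "L \<le> U")
  case True
  then have "(\<Sum>k\<in>{L..<U}. h^k * x k) = (\<Sum>j\<in>{0..<U-L}. h^(j+L) * x (j+L))"
    using sum.shift_bounds_nat_ivl[of "\<lambda>k. h^k * x k" 0 L "U-L"] by simp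
  then show ?thesis
    by (simp add: sum_distrib_left power_add lessThan_atLeast0 ac_simps)
qed simp

lemma sum_window_digits_bound:
  fixes h :: int
  assumes h: "h \<ge> 1" and x: "\<And>k. k \<in> {L..<U} \<Longrightarrow> x k \<in> {0..h-1}"
  shows "\<exists>c\<in>{0..h^(U-L)-1}. (\<Sum>k\<in>{L..<U}. h^k * x k) = c * h^L"
  using sum_digits_bound[OF h, of "U-L" "\<lambda>j. x (L + j)"] x
  unfolding sum_window_shift by (auto simp: mult.commute)

lemma sum_window_digits_inject:
  fixes h :: int
  assumes h: "h \<ge> 1"
    and x: "\<And>k. k \<in> {L..<U} \<Longrightarrow> x k \<in> {0..h-1}" and y: "\<And>k. k \<in> {L..<U} \<Longrightarrow> y k \<in> {0..h-1}"
    and eq: "(\<Sum>k\<in>{L..<U}. h^k * x k) = (\<Sum>k\<in>{L..<U}. h^k * y k)"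
    and k: "k \<in> {L..<U}"
  shows "x k = y k"
proof -
  have "(\<Sum>j<U-L. h^j * x (L + j)) = (\<Sum>j<U-L. h^j * y (L + j))"
    using eq h unfolding sum_window_shift by simp
  then have "\<forall>j<U-L. x (L + j) = y (L + j)"
    using x y by (intro sum_digits_inject[OF h]) auto
  then show ?thesis using k by (metis atLeastLessThan_iff diff_less_mono le_add_diff_inverse)
qed

lemma sum_window_digits_expansion:
  fixes h c :: int
  assumes h: "h \<ge> 1" and c: "c \<in> {0..h^(U-L)-1}"
  shows "(\<Sum>k\<in>{L..<U}. h^k * (c * h^L div h^k mod h)) = c * h^L"
proof -
  have "c * h^L div h^(L + j) = c div h^j" for j
    using h by (simp add: power_add zdiv_zmult2_eq mult.commute)
  then have "(\<Sum>k\<in>{L..<U}. h^k * (c * h^L div h^k mod h)) = h^L * (c mod h^(U-L))"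
    unfolding sum_window_shift by (simp add: sum_digits_mod[OF h])
  also have "c mod h^(U-L) = c" using c by (intro mod_pos_pos_trivial) auto
  finally show ?thesis by simp
qed

text \<open>Multiply A by the matrix E that is the identity except for its first column u: column 0
  of A E is q e_N, and deleting it together with row N leaves a lower triangular matrix.\<close>

lemma det_lower_hessenberg:
  fixes A :: "'a :: comm_ring_1 mat" and u :: "nat \<Rightarrow> 'a"
  assumes A: "A \<in> carrier_mat (Suc N) (Suc N)"
    and hess: "\<And>i j. i < N \<Longrightarrow> j < Suc N \<Longrightarrow> Suc i < j \<Longrightarrow> A $$ (i,j) = 0"
    and sol: "\<And>i. i < Suc N \<Longrightarrow> (\<Sum>j<Suc N. A $$ (i,j) * u j) = (if i = N then q else 0)"
  shows "det A * u 0 = (-1)^N * q * (\<Prod>i<N. A $$ (i, Suc i))"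
proof -
  define E where "E = mat (Suc N) (Suc N) (\<lambda>(i,j). if j = 0 then u i else if i = j then 1 else 0)"
  have E: "E \<in> carrier_mat (Suc N) (Suc N)" unfolding E_def by auto
  have "det E = prod_list (diag_mat E)"
    by (rule det_lower_triangular[OF _ E]) (auto simp: E_def)
  also have "\<dots> = u 0" unfolding prod_list_diag_prod using E
    by (simp add: E_def prod.atLeast0_lessThan_Suc_shift del: prod.op_ivl_Suc)
  finally have det_E: "det E = u 0" .
  have AE: "A * E \<in> carrier_mat (Suc N) (Suc N)" using A E by auto
  have AE_col0: "(A * E) $$ (i, 0) = (if i = N then q else 0)" if "i < Suc N" for i
    using A E that sol[OF that] by (simp add: scalar_prod_def E_def lessThan_atLeast0)
  have AE_col: "(A * E) $$ (i, Suc j) = A $$ (i, Suc j)" if "i < Suc N" "j < N" for i j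
    using A E that by (simp add: scalar_prod_def E_def if_distrib[of "\<lambda>x. _ * x"] cong: if_cong)
  have "det (A * E) = (\<Sum>i<Suc N. (A * E) $$ (i,0) * cofactor (A * E) i 0)"
    by (rule laplace_expansion_column[OF AE]) simp
  also have "\<dots> = q * cofactor (A * E) N 0"
    by (simp add: AE_col0 if_distrib[of "\<lambda>x. x * _"] cong: if_cong)
  also have "\<dots> = q * ((-1)^N * det (mat_delete (A * E) N 0))"
    by (simp add: cofactor_def)
  also have "det (mat_delete (A * E) N 0) = prod_list (diag_mat (mat_delete (A * E) N 0))"
  proof (rule det_lower_triangular[of N])
    show "mat_delete (A * E) N 0 \<in> carrier_mat N N" using mat_delete_carrier[OF AE] by simp
    fix i j assume "i < j" "j < N"
    then show "mat_delete (A * E) N 0 $$ (i, j) = 0"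
      using A E AE_col hess[of i "Suc j"] by (simp add: mat_delete_def)
  qed
  also have "\<dots> = (\<Prod>i<N. A $$ (i, Suc i))"
    unfolding prod_list_diag_prod using A E AE_col
    by (auto simp: mat_delete_def lessThan_atLeast0 intro!: prod.cong)
  finally have "det (A * E) = q * ((-1)^N * (\<Prod>i<N. A $$ (i, Suc i)))" .
  then show ?thesis using det_mult[OF A E] det_E by (simp add: ac_simps)
qed

lemma x_mult_monom: "[:0, 1:] * monom (c :: 'a :: comm_ring_1) e = monom c (Suc e)"
  by (simp add: monom_Suc)

lemma smult_sum_right: "Polynomial.smult a (\<Sum>i\<in>S. f i) = (\<Sum>i\<in>S. Polynomial.smult a (f i))"
  by (induction S rule: infinite_finite_induct) (simp_all add: smult_add_right)

lemma char_poly_matrix_row_mult: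
  fixes A :: "'a :: comm_ring_1 mat"
  assumes "A \<in> carrier_mat m m" and "r < m"
  shows "(\<Sum>j<m. char_poly_matrix A $$ (r, j) * u j) =
    [:0, 1:] * u r - (\<Sum>j<m. Polynomial.smult (A $$ (r, j)) (u j))"
proof -
  have "(\<Sum>j<m. char_poly_matrix A $$ (r, j) * u j) =
      (\<Sum>j<m. (if j = r then [:0, 1:] * u j else 0) - Polynomial.smult (A $$ (r, j)) (u j))"
    using assms by (intro sum.cong) (auto simp: char_poly_matrix_def)
  then show ?thesis using assms by (simp add: sum_subtractf sum.delta')
qed

text \<open>Position r stands for the paper's index r - n; D k s is the free entry in row k + 1 and
  column s - n of the paper.\<close>

definition digit_matrix :: "nat \<Rightarrow> int \<Rightarrow> (nat \<Rightarrow> nat \<Rightarrow> int) \<Rightarrow> int mat" where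
  "digit_matrix n h D = mat (2*n+1) (2*n+1) (\<lambda>(r, s).
     if s = Suc r then (if r \<le> n then 1 else h)
     else if n < r \<and> s < n then D (r - Suc n) s else 0)"

lemma Bset_iff:
  "B \<in> Bset n h \<longleftrightarrow> B \<in> carrier_mat (2*n+1) (2*n+1) \<and> (\<forall>r<2*n+1. \<forall>s<2*n+1.
     if s = Suc r then B $$ (r, s) = (if r \<le> n then 1 else h)
     else if n < r \<and> s < n then B $$ (r, s) \<in> {0..h-1} else B $$ (r, s) = 0)"
proof -
  have reindex: "(\<forall>i\<in>{-int n..int n}. \<forall>j\<in>{-int n..int n}. P i j) \<longleftrightarrow>
      (\<forall>r<2*n+1. \<forall>s<2*n+1. P (int r - int n) (int s - int n))" for P
  proof -
    have range_eq: "{-int n..int n} = (\<lambda>r. int r - int n) ` {..<2*n+1}"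
    proof (intro equalityI subsetI)
      fix i assume "i \<in> {-int n..int n}"
      then show "i \<in> (\<lambda>r. int r - int n) ` {..<2*n+1}"
        by (intro image_eqI[of _ _ "nat (i + int n)"]) auto
    qed auto
    show ?thesis unfolding range_eq ball_simps(9) by (simp add: Ball_def)
  qed
  show ?thesis
    unfolding Bset_def mem_Collect_eq reindex ent_def
    by (intro conj_cong refl all_cong) (auto simp: nat_add_distrib)
qed

lemma Bset_eq_digit_matrices:
  "Bset n h = digit_matrix n h ` {D. \<forall>k<n. \<forall>s<n. D k s \<in> {0..h-1}}"
proof (intro equalityI subsetI)
  fix B assume B: "B \<in> Bset n h"
  then have carrier: "B \<in> carrier_mat (2*n+1) (2*n+1)" by (simp add: Bset_iff)
  have entry: "if s = Suc r then B $$ (r, s) = (if r \<le> n then 1 else h)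
     else if n < r \<and> s < n then B $$ (r, s) \<in> {0..h-1} else B $$ (r, s) = 0"
    if "r < 2*n+1" "s < 2*n+1" for r s
    using B that unfolding Bset_iff by blast
  let ?D = "\<lambda>k s. B $$ (Suc n + k, s)"
  have "B = digit_matrix n h ?D"
  proof (rule eq_matI)
    fix r s assume "r < dim_row (digit_matrix n h ?D)" "s < dim_col (digit_matrix n h ?D)"
    then have rs: "r < 2*n+1" "s < 2*n+1" by (simp_all add: digit_matrix_def)
    then show "B $$ (r, s) = digit_matrix n h ?D $$ (r, s)"
      using entry[OF rs] by (simp add: digit_matrix_def split: if_splits)
  qed (use carrier in \<open>simp_all add: digit_matrix_def\<close>)
  moreover have "?D k s \<in> {0..h-1}" if "k < n" "s < n" for k s
    using entry[of "Suc n + k" s] that by simp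
  ultimately show "B \<in> digit_matrix n h ` {D. \<forall>k<n. \<forall>s<n. D k s \<in> {0..h-1}}" by blast
next
  fix B assume "B \<in> digit_matrix n h ` {D. \<forall>k<n. \<forall>s<n. D k s \<in> {0..h-1}}"
  then obtain D where B: "B = digit_matrix n h D" and D: "\<And>k s. k < n \<Longrightarrow> s < n \<Longrightarrow> D k s \<in> {0..h-1}"
    by blast
  have "D (r - Suc n) s \<in> {0..h-1}" if "r < 2*n+1" "n < r" "s < n" for r s
    using D that by simp
  then show "B \<in> Bset n h"
    unfolding Bset_iff B digit_matrix_def by simp
qed

lemma digit_matrix_row_smult_sum:
  fixes u :: "nat \<Rightarrow> int poly"
  assumes r: "r < 2*n+1"
  shows "(\<Sum>j<2*n+1. Polynomial.smult (digit_matrix n h D $$ (r, j)) (u j)) =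
    (if r < 2*n then Polynomial.smult (if r \<le> n then 1 else h) (u (Suc r)) else 0) +
    (if n < r then \<Sum>s<n. Polynomial.smult (D (r - Suc n) s) (u s) else 0)"
proof -
  let ?c = "if r \<le> n then 1 else h"
  let ?d = "\<lambda>j. if n < r then D (r - Suc n) j else 0"
  have "digit_matrix n h D $$ (r, j) = (if j = Suc r then ?c else 0) + (if j < n then ?d j else 0)"
    if "j < 2*n+1" for j
    using r that by (auto simp: digit_matrix_def)
  then have "(\<Sum>j<2*n+1. Polynomial.smult (digit_matrix n h D $$ (r, j)) (u j)) =
      (\<Sum>j<2*n+1. if j = Suc r then Polynomial.smult ?c (u j) else 0) +
      (\<Sum>j<2*n+1. if j \<in> {..<n} then Polynomial.smult (?d j) (u j) else 0)"
    unfolding sum.distrib[symmetric] by (intro sum.cong refl) (auto simp: smult_add_left)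
  also have "(\<Sum>j<2*n+1. if j \<in> {..<n} then Polynomial.smult (?d j) (u j) else 0) =
      (\<Sum>j\<in>{..<2*n+1} \<inter> {..<n}. Polynomial.smult (?d j) (u j))"
    by (simp add: sum.inter_restrict)
  also have "{..<2*n+1} \<inter> {..<n} = {..<n}" by auto
  finally show ?thesis by (cases "n < r") simp_all
qed

text \<open>(tI - B) sol_vec = sol_poly (2n+1) e_2n; the powers of h in sol_vec clear the
  denominators that the superdiagonal entries h would otherwise introduce.\<close>

definition sol_poly :: "nat \<Rightarrow> int \<Rightarrow> (nat \<Rightarrow> nat \<Rightarrow> int) \<Rightarrow> nat \<Rightarrow> int poly" where
  "sol_poly n h D p = monom 1 p - (\<Sum>k<p - Suc n. \<Sum>s<n. monom (h^k * D k s) (s + (p - n - 2 - k)))"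

definition sol_vec :: "nat \<Rightarrow> int \<Rightarrow> (nat \<Rightarrow> nat \<Rightarrow> int) \<Rightarrow> nat \<Rightarrow> int poly" where
  "sol_vec n h D p = Polynomial.smult (h ^ min (n - 1) (2*n - p)) (sol_poly n h D p)"

lemma sol_poly_low: "p \<le> Suc n \<Longrightarrow> sol_poly n h D p = monom 1 p"
  by (simp add: sol_poly_def)

lemma sol_vec_low: "p \<le> n \<Longrightarrow> sol_vec n h D p = monom (h^(n-1)) p"
  by (simp add: sol_vec_def sol_poly_low smult_monom)

lemma sol_poly_Suc:
  assumes p: "Suc n \<le> p"
  shows "sol_poly n h D (Suc p) =
    [:0, 1:] * sol_poly n h D p - (\<Sum>s<n. monom (h^(p - Suc n) * D (p - Suc n) s) s)"
proof -
  let ?F = "\<lambda>e k. \<Sum>s<n. monom (h^k * D k s) (s + e k)"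
  have "Suc p - Suc n = Suc (p - Suc n)" using p by simp
  then have "(\<Sum>k<Suc p - Suc n. ?F (\<lambda>k. Suc p - n - 2 - k) k) =
      (\<Sum>k<p - Suc n. ?F (\<lambda>k. Suc p - n - 2 - k) k) + ?F (\<lambda>k. Suc p - n - 2 - k) (p - Suc n)"
    by simp
  also have "(\<Sum>k<p - Suc n. ?F (\<lambda>k. Suc p - n - 2 - k) k) =
      (\<Sum>k<p - Suc n. ?F (\<lambda>k. Suc (p - n - 2 - k)) k)"
    by (intro sum.cong refl arg_cong2[where f = monom]) auto
  also have "\<dots> = [:0, 1:] * (\<Sum>k<p - Suc n. ?F (\<lambda>k. p - n - 2 - k) k)"
    by (simp only: sum_distrib_left x_mult_monom add_Suc_right)
  also have "?F (\<lambda>k. Suc p - n - 2 - k) (p - Suc n) =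
      (\<Sum>s<n. monom (h^(p - Suc n) * D (p - Suc n) s) s)"
    using p by (simp add: Suc_diff_Suc)
  finally have "(\<Sum>k<Suc p - Suc n. ?F (\<lambda>k. Suc p - n - 2 - k) k) =
      [:0, 1:] * (\<Sum>k<p - Suc n. ?F (\<lambda>k. p - n - 2 - k) k) +
      (\<Sum>s<n. monom (h^(p - Suc n) * D (p - Suc n) s) s)" .
  then show ?thesis
    unfolding sol_poly_def x_mult_monom[of 1 p, symmetric]
    by (simp only: right_diff_distrib diff_diff_eq)
qed

lemma char_poly_matrix_digit_matrix_sol_vec:
  assumes n: "n \<ge> 1" and r: "r < 2*n+1"
  shows "(\<Sum>j<2*n+1. char_poly_matrix (digit_matrix n h D) $$ (r, j) * sol_vec n h D j) =
    (if r = 2*n then sol_poly n h D (2*n+1) else 0)"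
proof -
  let ?X = "[:0, 1:] :: int poly"
  let ?u = "sol_vec n h D" and ?w = "sol_poly n h D"
  let ?digits = "\<Sum>s<n. monom (h^(n-1) * D (r - Suc n) s) s"
  have M: "digit_matrix n h D \<in> carrier_mat (2*n+1) (2*n+1)" by (simp add: digit_matrix_def)
  have "(\<Sum>j<2*n+1. char_poly_matrix (digit_matrix n h D) $$ (r, j) * ?u j) =
      ?X * ?u r - ((if r < 2*n then Polynomial.smult (if r \<le> n then 1 else h) (?u (Suc r)) else 0) +
        (if n < r then \<Sum>s<n. Polynomial.smult (D (r - Suc n) s) (?u s) else 0))"
    unfolding char_poly_matrix_row_mult[OF M r] digit_matrix_row_smult_sum[OF r] ..
  also have "(\<Sum>s<n. Polynomial.smult (D (r - Suc n) s) (?u s)) = ?digits"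
    by (simp add: sol_vec_low smult_monom mult.commute)
  also have "?X * ?u r -
      ((if r < 2*n then Polynomial.smult (if r \<le> n then 1 else h) (?u (Suc r)) else 0) +
        (if n < r then ?digits else 0)) = (if r = 2*n then ?w (2*n+1) else 0)"
  proof -
    consider "r < n" | "r = n" | "n < r" "r < 2*n" | "r = 2*n" using n r by linarith
    then show ?thesis
    proof cases
      case 1
      then show ?thesis by (simp add: sol_vec_low monom_Suc)
    next
      case 2
      then show ?thesis using n by (simp add: sol_vec_def sol_poly_low monom_Suc smult_monom)
    next
      case 3
      have "n - 1 = Suc (2*n - Suc r + (r - Suc n))" using 3 by linarith
      then have "h^(n-1) = h * h^(2*n - Suc r) * h^(r - Suc n)"
        by (simp only: power_Suc power_add mult.assoc)
      moreover have "h^(2*n - r) = h * h^(2*n - Suc r)"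
        using 3 by (simp add: Suc_diff_Suc flip: power_Suc)
      ultimately have "Polynomial.smult h (?u (Suc r)) = ?X * ?u r - ?digits"
        using 3 by (simp add: sol_vec_def sol_poly_Suc smult_diff_right smult_sum_right
            smult_monom mult.assoc)
      then show ?thesis using 3 by simp
    next
      case 4
      then show ?thesis using n by (simp add: sol_vec_def sol_poly_Suc)
    qed
  qed
  finally show ?thesis .
qed

lemma char_poly_digit_matrix:
  assumes n: "n \<ge> 1" and h: "h \<noteq> 0"
  shows "char_poly (digit_matrix n h D) =
    monom 1 (2*n+1) - (\<Sum>k<n. \<Sum>s<n. monom (h^k * D k s) (s + (n - 1 - k)))"
proof -
  let ?A = "char_poly_matrix (digit_matrix n h D)"
  have A: "?A \<in> carrier_mat (Suc (2*n)) (Suc (2*n))" by (simp add: digit_matrix_def)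
  have "det ?A * sol_vec n h D 0 = (-1)^(2*n) * sol_poly n h D (2*n+1) * (\<Prod>i<2*n. ?A $$ (i, Suc i))"
  proof (rule det_lower_hessenberg[OF A])
    fix i j assume "i < 2*n" "j < Suc (2*n)" "Suc i < j"
    then show "?A $$ (i, j) = 0" by (simp add: char_poly_matrix_def digit_matrix_def)
  next
    fix i assume "i < Suc (2*n)"
    then show "(\<Sum>j<Suc (2*n). ?A $$ (i, j) * sol_vec n h D j) =
        (if i = 2*n then sol_poly n h D (2*n+1) else 0)"
      using char_poly_matrix_digit_matrix_sol_vec[OF n, of i] by simp
  qed
  also have "(\<Prod>i<2*n. ?A $$ (i, Suc i)) = [:\<Prod>i<2*n. - (if i \<le> n then 1 else h):]"
    by (simp add: char_poly_matrix_def digit_matrix_def flip: prod_to_poly)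
  also have "(\<Prod>i<m. - (if i \<le> n then 1 else h)) = (-1)^m * h^(m - Suc n)" for m
  proof (induction m)
    case (Suc m)
    show ?case
    proof (cases "m \<le> n")
      case False
      then have "Suc m - Suc n = Suc (m - Suc n)" by simp
      then show ?thesis using Suc.IH False by (simp add: mult.commute)
    qed (use Suc.IH in \<open>simp add: Suc_diff_le\<close>)
  qed simp
  finally have "Polynomial.smult (h^(n-1)) (det ?A) =
      Polynomial.smult (h^(n-1)) (sol_poly n h D (2*n+1))"
    using n by (simp add: sol_vec_low monom_0 mult_2)
  then have "char_poly (digit_matrix n h D) = sol_poly n h D (2*n+1)"
    unfolding char_poly_def by (rule smult_cancel[rotated]) (use h in simp)
  then show ?thesis
    unfolding sol_poly_def by (simp add: numeral_2_eq_2)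
qed

text \<open>The coefficient of t^m collects the entries D k s on the diagonal s - k = m + 1 - n;
  their rows k range over [diag_lo n m, diag_hi n m).\<close>

abbreviation diag_lo :: "nat \<Rightarrow> nat \<Rightarrow> nat" where
  "diag_lo n m \<equiv> n - 1 - m"

abbreviation diag_hi :: "nat \<Rightarrow> nat \<Rightarrow> nat" where
  "diag_hi n m \<equiv> min n (2*n - 1 - m)"

lemma coeff_char_poly_digit_matrix:
  assumes n: "n \<ge> 1" and h: "h \<noteq> 0"
  shows "coeff (char_poly (digit_matrix n h D)) m =
    (if m = 2*n+1 then 1 else 0) - (\<Sum>k\<in>{diag_lo n m..<diag_hi n m}. h^k * D k (m + k + 1 - n))"
proof -
  have diagonal: "(\<Sum>s<n. if s + (n - 1 - k) = m then h^k * D k s else 0) =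
      (if k \<in> {diag_lo n m..<diag_hi n m} then h^k * D k (m + k + 1 - n) else 0)" if "k < n" for k
  proof (cases "n - 1 - k \<le> m")
    case True
    then have "(\<Sum>s<n. if s + (n - 1 - k) = m then h^k * D k s else 0) =
        (\<Sum>s<n. if s = m + k + 1 - n then h^k * D k s else 0)"
      using that by (intro sum.cong) auto
    then show ?thesis using True that by auto
  qed (auto intro!: sum.neutral)
  have "coeff (char_poly (digit_matrix n h D)) m = (if m = 2*n+1 then 1 else 0) -
      (\<Sum>k<n. \<Sum>s<n. if s + (n - 1 - k) = m then h^k * D k s else 0)"
    using n h by (simp add: char_poly_digit_matrix coeff_sum coeff_monom)
  also have "(\<Sum>k<n. \<Sum>s<n. if s + (n - 1 - k) = m then h^k * D k s else 0) =
      (\<Sum>k\<in>{..<n} \<inter> {diag_lo n m..<diag_hi n m}. h^k * D k (m + k + 1 - n))"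
    unfolding sum.inter_restrict[OF finite_lessThan] by (intro sum.cong refl, rule diagonal) simp
  also have "{..<n} \<inter> {diag_lo n m..<diag_hi n m} = {diag_lo n m..<diag_hi n m}" by auto
  finally show ?thesis .
qed

lemma all_index_le_double_split:
  fixes n :: nat and Q :: "nat \<Rightarrow> bool"
  assumes n: "n \<ge> 1"
  shows "(\<forall>m\<le>2*n. Q m) \<longleftrightarrow>
    Q (2*n) \<and> Q (2*n - 1) \<and> (\<forall>k\<in>{2..n+1}. Q (2*n - k)) \<and> (\<forall>k\<in>{2..n}. Q (n - k))"
proof
  assume "\<forall>m\<le>2*n. Q m"
  then show "Q (2*n) \<and> Q (2*n - 1) \<and> (\<forall>k\<in>{2..n+1}. Q (2*n - k)) \<and> (\<forall>k\<in>{2..n}. Q (n - k))"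
    by simp
next
  assume Q: "Q (2*n) \<and> Q (2*n - 1) \<and> (\<forall>k\<in>{2..n+1}. Q (2*n - k)) \<and> (\<forall>k\<in>{2..n}. Q (n - k))"
  show "\<forall>m\<le>2*n. Q m"
  proof (intro allI impI)
    fix m assume m: "m \<le> 2*n"
    then consider "m = 2*n" | "m = 2*n - 1" | "n - 1 \<le> m" "m \<le> 2*n - 2" | "m + 2 \<le> n"
      using n by linarith
    then show "Q m"
    proof cases
      case 3
      then have "2*n - m \<in> {2..n+1}" using n m by auto
      then have "Q (2*n - (2*n - m))" using Q by blast
      then show ?thesis using m by simp
    next
      case 4
      then have "n - m \<in> {2..n}" by auto
      then have "Q (n - (n - m))" using Q by blast
      then show ?thesis using 4 by simp
    qed (use Q in simp_all)
  qed
qed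

lemma Pset_iff:
  assumes n: "n \<ge> 1"
  shows "p \<in> Pset n h \<longleftrightarrow> degree p = 2*n+1 \<and> coeff p (2*n+1) = 1 \<and>
    (\<forall>m\<le>2*n. \<exists>c\<in>{0..h^(diag_hi n m - diag_lo n m) - 1}. - coeff p m = c * h^(diag_lo n m))"
proof -
  let ?Q = "\<lambda>m. \<exists>c\<in>{0..h^(diag_hi n m - diag_lo n m) - 1}. - coeff p m = c * h^(diag_lo n m)"
  have top: "?Q m \<longleftrightarrow> coeff p m = 0" if "2*n - 1 \<le> m" for m
    using that by simp
  have high: "?Q (2*n - k) \<longleftrightarrow> - coeff p (2*n - k) \<in> {0..h^(k-1) - 1}" if "k \<in> {2..n+1}" for k
  proof -
    have "diag_lo n (2*n - k) = 0" "diag_hi n (2*n - k) = k - 1" using that by auto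
    then show ?thesis by auto
  qed
  have low: "?Q (n - k) \<longleftrightarrow> (\<exists>c\<in>{0..h^(n-k+1) - 1}. - coeff p (n - k) = c * h^(k-1))"
    if "k \<in> {2..n}" for k
  proof -
    have lo: "diag_lo n (n - k) = k - 1" and width: "diag_hi n (n - k) - (k - 1) = n - k + 1"
      using that by auto
    show ?thesis by (simp only: lo width)
  qed
  have "(\<forall>k\<in>{2..n+1}. ?Q (2*n - k)) \<longleftrightarrow> (\<forall>k\<in>{2..n+1}. - coeff p (2*n - k) \<in> {0..h^(k-1) - 1})"
    using high by (rule ball_cong[OF refl])
  moreover have "(\<forall>k\<in>{2..n}. ?Q (n - k)) \<longleftrightarrow>
      (\<forall>k\<in>{2..n}. \<exists>c\<in>{0..h^(n-k+1) - 1}. - coeff p (n - k) = c * h^(k-1))"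
    using low by (rule ball_cong[OF refl])
  moreover have "?Q (2*n) \<longleftrightarrow> coeff p (2*n) = 0" "?Q (2*n - 1) \<longleftrightarrow> coeff p (2*n - 1) = 0"
    by (simp_all only: top le_refl diff_le_self)
  ultimately show ?thesis
    unfolding Pset_def mem_Collect_eq all_index_le_double_split[OF n] by (simp only: conj_assoc)
qed

lemma diag_window_index:
  assumes "k \<in> {diag_lo n m..<diag_hi n m}"
  shows "k < n" and "m + k + 1 - n < n" and "m + k + 1 - n + (n - 1 - k) = m"
  using assms by auto

lemma char_poly_digit_matrix_in_Pset:
  assumes n: "n \<ge> 1" and h: "h \<ge> 1" and D: "\<forall>k<n. \<forall>s<n. D k s \<in> {0..h-1}"
  shows "char_poly (digit_matrix n h D) \<in> Pset n h"
proof -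
  let ?p = "char_poly (digit_matrix n h D)"
  have cf: "coeff ?p m = (if m = 2*n+1 then 1 else 0) -
      (\<Sum>k\<in>{diag_lo n m..<diag_hi n m}. h^k * D k (m + k + 1 - n))" for m
    using n h by (simp add: coeff_char_poly_digit_matrix)
  have lead: "coeff ?p (2*n+1) = 1" by (simp add: cf)
  have "degree ?p = 2*n+1"
  proof (rule antisym)
    show "degree ?p \<le> 2*n+1" by (rule degree_le) (simp add: cf)
    show "2*n+1 \<le> degree ?p" by (rule le_degree) (use lead in simp)
  qed
  moreover have "\<exists>c\<in>{0..h^(diag_hi n m - diag_lo n m) - 1}. - coeff ?p m = c * h^(diag_lo n m)"
    if "m \<le> 2*n" for m
  proof -
    have "D k (m + k + 1 - n) \<in> {0..h-1}" if "k \<in> {diag_lo n m..<diag_hi n m}" for k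
      using D diag_window_index[OF that] by blast
    then have "\<exists>c\<in>{0..h^(diag_hi n m - diag_lo n m) - 1}.
        (\<Sum>k\<in>{diag_lo n m..<diag_hi n m}. h^k * D k (m + k + 1 - n)) = c * h^(diag_lo n m)"
      by (rule sum_window_digits_bound[OF h])
    then show ?thesis using that by (simp add: cf)
  qed
  ultimately show ?thesis
    unfolding Pset_iff[OF n] using lead by blast
qed

lemma char_poly_digit_matrix_inject:
  assumes n: "n \<ge> 1" and h: "h \<ge> 1"
    and D1: "\<forall>k<n. \<forall>s<n. D1 k s \<in> {0..h-1}" and D2: "\<forall>k<n. \<forall>s<n. D2 k s \<in> {0..h-1}"
    and eq: "char_poly (digit_matrix n h D1) = char_poly (digit_matrix n h D2)"
  shows "digit_matrix n h D1 = digit_matrix n h D2"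
proof -
  have same_digits: "D1 k s = D2 k s" if "k < n" "s < n" for k s
  proof -
    define m where "m = s + (n - 1 - k)"
    have k: "k \<in> {diag_lo n m..<diag_hi n m}" and s: "m + k + 1 - n = s"
      using that unfolding m_def by auto
    have "D1 j (m + j + 1 - n) \<in> {0..h-1}" "D2 j (m + j + 1 - n) \<in> {0..h-1}"
      if "j \<in> {diag_lo n m..<diag_hi n m}" for j
      using D1 D2 diag_window_index[OF that] by blast+
    moreover have "(\<Sum>j\<in>{diag_lo n m..<diag_hi n m}. h^j * D1 j (m + j + 1 - n)) =
        (\<Sum>j\<in>{diag_lo n m..<diag_hi n m}. h^j * D2 j (m + j + 1 - n))"
      using arg_cong[OF eq, of "\<lambda>p. coeff p m"] n h by (simp add: coeff_char_poly_digit_matrix)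
    ultimately have "D1 k (m + k + 1 - n) = D2 k (m + k + 1 - n)"
      by (rule sum_window_digits_inject[OF h _ _ _ k])
    then show ?thesis unfolding s .
  qed
  show ?thesis
  proof (rule eq_matI)
    fix r s assume "r < dim_row (digit_matrix n h D2)" "s < dim_col (digit_matrix n h D2)"
    then have rs: "r < 2*n+1" "s < 2*n+1" by (simp_all add: digit_matrix_def)
    show "digit_matrix n h D1 $$ (r, s) = digit_matrix n h D2 $$ (r, s)"
    proof (cases "n < r \<and> s < n")
      case True
      then have "r - Suc n < n" using rs by linarith
      with True rs show ?thesis using same_digits by (simp add: digit_matrix_def)
    qed (use rs in \<open>auto simp: digit_matrix_def\<close>)
  qed (simp_all add: digit_matrix_def)
qed

definition poly_digits :: "nat \<Rightarrow> int \<Rightarrow> int poly \<Rightarrow> nat \<Rightarrow> nat \<Rightarrow> int" where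
  "poly_digits n h p k s = - coeff p (s + (n - 1 - k)) div h^k mod h"

lemma char_poly_digit_matrix_poly_digits:
  assumes n: "n \<ge> 1" and h: "h \<ge> 1" and p: "p \<in> Pset n h"
  shows "char_poly (digit_matrix n h (poly_digits n h p)) = p"
proof (rule poly_eqI)
  fix m
  have deg: "degree p = 2*n+1" and lead: "coeff p (2*n+1) = 1"
    and window: "\<And>m. m \<le> 2*n \<Longrightarrow>
      \<exists>c\<in>{0..h^(diag_hi n m - diag_lo n m) - 1}. - coeff p m = c * h^(diag_lo n m)"
    using p unfolding Pset_iff[OF n] by blast+
  have digits: "poly_digits n h p k (m + k + 1 - n) = - coeff p m div h^k mod h"
    if "k \<in> {diag_lo n m..<diag_hi n m}" for k
    unfolding poly_digits_def diag_window_index(3)[OF that] ..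
  have "(\<Sum>k\<in>{diag_lo n m..<diag_hi n m}. h^k * poly_digits n h p k (m + k + 1 - n)) =
      (if m \<le> 2*n then - coeff p m else 0)"
  proof (cases "m \<le> 2*n")
    case True
    then obtain c where c: "c \<in> {0..h^(diag_hi n m - diag_lo n m) - 1}"
      and a: "- coeff p m = c * h^(diag_lo n m)"
      using window by blast
    have "(\<Sum>k\<in>{diag_lo n m..<diag_hi n m}. h^k * poly_digits n h p k (m + k + 1 - n)) =
        (\<Sum>k\<in>{diag_lo n m..<diag_hi n m}. h^k * (c * h^(diag_lo n m) div h^k mod h))"
      by (intro sum.cong refl) (simp only: digits a)
    also have "\<dots> = c * h^(diag_lo n m)" by (rule sum_window_digits_expansion[OF h c])
    finally show ?thesis using True a by simp
  qed simp
  then show "coeff (char_poly (digit_matrix n h (poly_digits n h p))) m = coeff p m"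
    using n h deg lead by (auto simp: coeff_char_poly_digit_matrix coeff_eq_0)
qed

theorem mainTheorem4:
  fixes n :: nat and h :: int
  assumes "n \<ge> 1" and "h \<ge> 1"
  shows "bij_betw char_poly (Bset n h) (Pset n h)"
proof (rule bij_betw_imageI)
  show "inj_on char_poly (Bset n h)"
    unfolding Bset_eq_digit_matrices
    by (auto intro!: inj_onI char_poly_digit_matrix_inject[OF assms])
  show "char_poly ` Bset n h = Pset n h"
  proof (intro equalityI subsetI)
    fix p assume "p \<in> char_poly ` Bset n h"
    then show "p \<in> Pset n h"
      unfolding Bset_eq_digit_matrices using char_poly_digit_matrix_in_Pset[OF assms] by blast
  next
    fix p assume p: "p \<in> Pset n h"
    have "poly_digits n h p k s \<in> {0..h-1}" for k s
      using assms by (simp add: poly_digits_def)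
    then have "digit_matrix n h (poly_digits n h p) \<in> Bset n h"
      unfolding Bset_eq_digit_matrices by blast
    with char_poly_digit_matrix_poly_digits[OF assms p] show "p \<in> char_poly ` Bset n h"
      by (metis image_eqI)
  qed
qed

end
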